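(* $(\mathfrak{ss}_e^{\varepsilon})^\perp=\aleph_0$ for every $\varepsilon>0$.
   Context: Let $\mathfrak S_{cc}$ be the set of all sequences $\mathbf a=\langle a_i:i\in\omega\rangle$ of rational numbers with $a_i\to0$ such that $\sum_i a_i$ is conditionally convergent (converges to a real number, with the positive terms summing to $+\infty$ and the negative terms to $-\infty$). Let $[\omega]^\omega_\omega$ be the set of infinite coinfinite subsets of $\omega$; for such $X$ with increasing enumeration $\langle i_n\rangle$, $\sum_X\mathbf a$ denotes $\sum_n a_{i_n}$. For $\varepsilon>0$, $(\mathfrak{ss}_e^{\varepsilon})^\perp$ is the least cardinality of a family $\mathcal A\subseteq\mathfrak S_{cc}$ such that there is no $X\in[\omega]^\omega_\omega$ for which, for every $\mathbf a\in\mathcal A$, $\sum_X\mathbf a$ converges to a limit in the open interval $(\sum\mathbf a-\varepsilon,\sum\mathbf a+\varepsilon)$. *)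

theory Defs
  imports "HOL-Analysis.Analysis" "HOL-Library.Infinite_Set"
begin

text \<open>Rational sequences tending to 0 whose series converges conditionally:
  the series converges to a real number, the positive parts sum to +infinity
  and the negative parts sum to -infinity.\<close>
definition S_cc :: "(nat \<Rightarrow> rat) set" where
  "S_cc = {a. (\<lambda>i. real_of_rat (a i)) \<longlonglongrightarrow> 0
             \<and> summable (\<lambda>i. real_of_rat (a i))
             \<and> filterlim (\<lambda>n. \<Sum>i<n. max 0 (real_of_rat (a i))) at_top sequentially
             \<and> filterlim (\<lambda>n. \<Sum>i<n. min 0 (real_of_rat (a i))) at_bot sequentially}"

definition inf_coinf :: "nat set set" where
  "inf_coinf = {X. infinite X \<and> infinite (- X)}"

definition good_sub :: "real \<Rightarrow> nat set \<Rightarrow> (nat \<Rightarrow> rat) \<Rightarrow> bool" where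
  "good_sub \<epsilon> X a \<longleftrightarrow> (\<exists>L. (\<lambda>n. real_of_rat (a (enumerate X n))) sums L
        \<and> suminf (\<lambda>i. real_of_rat (a i)) - \<epsilon> < L \<and> L < suminf (\<lambda>i. real_of_rat (a i)) + \<epsilon>)"

definition ss_perp_family :: "real \<Rightarrow> (nat \<Rightarrow> rat) set \<Rightarrow> bool" where
  "ss_perp_family \<epsilon> \<A> \<longleftrightarrow> \<A> \<subseteq> S_cc \<and> \<not> (\<exists>X\<in>inf_coinf. \<forall>a\<in>\<A>. good_sub \<epsilon> X a)"

text \<open>The least cardinality of such a family equals aleph_0: some witnessing family has
  cardinality aleph_0 (= natLeq), and every witnessing family has cardinality at least aleph_0.\<close>
definition ss_perp_is_aleph0 :: "real \<Rightarrow> bool" where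
  "ss_perp_is_aleph0 \<epsilon> \<longleftrightarrow>
     (\<exists>\<A>. ss_perp_family \<epsilon> \<A> \<and> (card_of \<A>, natLeq) \<in> ordIso)
   \<and> (\<forall>\<A>. ss_perp_family \<epsilon> \<A> \<longrightarrow> (natLeq, card_of \<A>) \<in> ordLeq)"

end

theory Submission
  imports Defs
begin

text \<open>Given an infinite coinfinite X, pick m in X and m' outside X. Adding a rational
  q \<ge> 2\<epsilon> to the m-th or to the m'-th term of one fixed conditionally convergent series
  gives two series with the same sum, but their subseries along X differ by exactly q, so they
  cannot both lie within \<epsilon> of that sum; the countably many single-term perturbations of
  one series thus form a witnessing family. Conversely, since all terms of finitely many series
  tend to 0, one can remove a sparse infinite set of indices k 0 < k 1 < ... on which every
  series has terms below \<epsilon>/4 \<cdot> 2 ^ -j at index k j; the remaining subseries of each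
  series then sums to within \<epsilon>/2 of the full sum.\<close>

lemma sums_enumerate_iff:
  fixes f :: "nat \<Rightarrow> 'a::real_normed_vector"
  assumes "infinite X"
  shows "(\<lambda>n. f (enumerate X n)) sums L \<longleftrightarrow> (\<lambda>i. if i \<in> X then f i else 0) sums L"
proof -
  have "(\<lambda>n. (\<lambda>i. if i \<in> X then f i else 0) (enumerate X n)) sums L
      \<longleftrightarrow> (\<lambda>i. if i \<in> X then f i else 0) sums L"
    by (rule sums_mono_reindex) (auto simp: strict_mono_enumerate range_enumerate assms)
  then show ?thesis
    using enumerate_in_set[OF assms] by simp
qed

lemma sums_fun_upd:
  fixes f :: "nat \<Rightarrow> 'a::{t2_space,topological_ab_group_add}"
  assumes "f sums s"
  shows "f(m := x) sums (s + (x - f m))"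
  using sums_If_finite_set'[OF assms, where A = "{m}" and f = "\<lambda>_. x"] by (simp add: fun_upd_def)

lemma sums_fun_upd_iff:
  fixes f :: "nat \<Rightarrow> 'a::{t2_space,topological_ab_group_add}"
  shows "f(m := x) sums (s + (x - f m)) \<longleftrightarrow> f sums s"
  using sums_fun_upd[of f s m x] sums_fun_upd[of "f(m := x)" "s + (x - f m)" m "f m"]
  by auto

lemma sums_enumerate_fun_upd_add:
  fixes f :: "nat \<Rightarrow> 'a::real_normed_vector"
  assumes "infinite X" and "m \<in> X"
  shows "(\<lambda>n. (f(m := f m + c)) (enumerate X n)) sums (L + c) \<longleftrightarrow> (\<lambda>n. f (enumerate X n)) sums L"
proof -
  define g where "g i = (if i \<in> X then f i else 0)" for i
  have "(\<lambda>n. (f(m := f m + c)) (enumerate X n)) sums (L + c)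
      \<longleftrightarrow> (\<lambda>i. if i \<in> X then (f(m := f m + c)) i else 0) sums (L + c)"
    by (rule sums_enumerate_iff[OF assms(1)])
  also have "(\<lambda>i. if i \<in> X then (f(m := f m + c)) i else 0) = g(m := g m + c)"
    using assms(2) by (auto simp: g_def)
  also have "g(m := g m + c) sums (L + c) \<longleftrightarrow> g sums L"
    using sums_fun_upd_iff[of g m "g m + c" L] by simp
  also have "\<dots> \<longleftrightarrow> (\<lambda>n. f (enumerate X n)) sums L"
    unfolding g_def[abs_def] by (rule sums_enumerate_iff[OF assms(1), symmetric])
  finally show ?thesis .
qed

lemma sum_lessThan_fun_upd:
  fixes f :: "nat \<Rightarrow> 'a" and g :: "'a \<Rightarrow> 'b::ab_group_add"
  assumes "m < n"
  shows "(\<Sum>i<n. g ((f(m := x)) i)) = (g x - g (f m)) + (\<Sum>i<n. g (f i))"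
proof -
  have "(\<Sum>i<n. g ((f(m := x)) i)) = g x + (\<Sum>i\<in>{..<n} - {m}. g ((f(m := x)) i))"
    by (subst sum.remove[of "{..<n}" m]) (use assms in auto)
  also have "(\<Sum>i\<in>{..<n} - {m}. g ((f(m := x)) i)) = (\<Sum>i\<in>{..<n} - {m}. g (f i))"
    by (rule sum.cong) auto
  also have "g x + \<dots> = (g x - g (f m)) + (\<Sum>i<n. g (f i))"
    using assms by (simp add: sum.remove[of "{..<n}" m])
  finally show ?thesis .
qed

lemma S_cc_fun_upd:
  assumes "a \<in> S_cc"
  shows "a(m := r) \<in> S_cc"
proof -
  define f where "f i = real_of_rat (a i)" for i
  define x where "x = real_of_rat r"
  have upd: "\<forall>\<^sub>F i in sequentially. (f(m := x)) i = f i"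
    using eventually_gt_at_top[of m] by eventually_elim simp
  have partial: "\<forall>\<^sub>F n in sequentially.
      (\<Sum>i<n. g ((f(m := x)) i)) = (g x - g (f m)) + (\<Sum>i<n. g (f i))" for g :: "real \<Rightarrow> real"
    using eventually_gt_at_top[of m] by eventually_elim (rule sum_lessThan_fun_upd)
  have "f \<longlonglongrightarrow> 0" and "summable f"
    and pos: "filterlim (\<lambda>n. \<Sum>i<n. max 0 (f i)) at_top sequentially"
    and neg: "filterlim (\<lambda>n. \<Sum>i<n. min 0 (f i)) at_bot sequentially"
    using assms by (auto simp: S_cc_def f_def[abs_def])
  then have "f(m := x) \<longlonglongrightarrow> 0" and "summable (f(m := x))"
    by (simp_all add: tendsto_cong[OF upd] summable_cong[OF upd])
  moreover have "filterlim (\<lambda>n. \<Sum>i<n. max 0 ((f(m := x)) i)) at_top sequentially"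
    unfolding filterlim_cong[OF refl refl partial]
    by (rule filterlim_tendsto_add_at_top[OF tendsto_const pos])
  moreover have "filterlim (\<lambda>n. \<Sum>i<n. min 0 ((f(m := x)) i)) at_bot sequentially"
    unfolding filterlim_cong[OF refl refl partial] filterlim_tendsto_add_at_bot_iff[OF tendsto_const]
    by (rule neg)
  moreover have "real_of_rat ((a(m := r)) i) = (f(m := x)) i" for i
    by (simp add: f_def x_def)
  ultimately show ?thesis
    unfolding S_cc_def mem_Collect_eq by presburger
qed

lemma not_all_good_sub_bumps:
  assumes X: "X \<in> inf_coinf" and summable: "summable (\<lambda>i. real_of_rat (a i))"
    and q: "2 * \<epsilon> \<le> real_of_rat q"
  shows "\<not> (\<forall>m. good_sub \<epsilon> X (a(m := a m + q)))"
proof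
  assume good: "\<forall>m. good_sub \<epsilon> X (a(m := a m + q))"
  define f where "f i = real_of_rat (a i)" for i
  define Q where "Q = real_of_rat q"
  have X_inf: "infinite X" and "infinite (- X)"
    using X by (auto simp: inf_coinf_def)
  then obtain m1 m2 where "m1 \<in> X" and "m2 \<notin> X"
    by (metis ComplD ex_in_conv infinite_imp_nonempty)
  have bump: "real_of_rat ((a(m := a m + q)) i) = (f(m := f m + Q)) i" for m i
    by (simp add: f_def Q_def of_rat_add)
  have sum_bump: "suminf (f(m := f m + Q)) = suminf f + Q" for m
    using sums_fun_upd[OF summable_sums[OF summable[folded f_def]], of m "f m + Q"]
    by (simp add: sums_iff)
  then have good_f: "\<exists>L. (\<lambda>n. (f(m := f m + Q)) (enumerate X n)) sums L
      \<and> suminf f + Q - \<epsilon> < L \<and> L < suminf f + Q + \<epsilon>" for m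
    using good unfolding good_sub_def bump sum_bump by blast
  obtain L1 where L1: "(\<lambda>n. (f(m1 := f m1 + Q)) (enumerate X n)) sums L1"
    and "L1 < suminf f + Q + \<epsilon>"
    using good_f[of m1] by blast
  have "(\<lambda>n. f (enumerate X n)) sums (L1 - Q)"
    using L1 sums_enumerate_fun_upd_add[OF X_inf \<open>m1 \<in> X\<close>, of f Q "L1 - Q"] by simp
  moreover obtain L2 where L2: "(\<lambda>n. (f(m2 := f m2 + Q)) (enumerate X n)) sums L2"
    and "suminf f + Q - \<epsilon> < L2"
    using good_f[of m2] by blast
  moreover have "(\<lambda>n. (f(m2 := f m2 + Q)) (enumerate X n)) = (\<lambda>n. f (enumerate X n))"
    using enumerate_in_set[OF X_inf] \<open>m2 \<notin> X\<close> by fastforce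
  ultimately have "L1 - Q = L2"
    by (simp add: sums_unique2)
  with \<open>L1 < suminf f + Q + \<epsilon>\<close> \<open>suminf f + Q - \<epsilon> < L2\<close> q show False
    by (simp add: Q_def)
qed

lemma ss_perp_family_bumps:
  assumes "a \<in> S_cc" and "2 * \<epsilon> \<le> real_of_rat q"
  shows "ss_perp_family \<epsilon> (range (\<lambda>m. a(m := a m + q)))"
proof -
  have "summable (\<lambda>i. real_of_rat (a i))"
    using assms(1) by (simp add: S_cc_def)
  then show ?thesis
    using assms S_cc_fun_upd not_all_good_sub_bumps unfolding ss_perp_family_def by blast
qed

lemma inj_bumps:
  fixes a :: "nat \<Rightarrow> 'a::cancel_comm_monoid_add"
  assumes "q \<noteq> 0"
  shows "inj (\<lambda>m. a(m := a m + q))"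
proof (rule injI)
  fix m m' assume eq: "a(m := a m + q) = a(m' := a m' + q)"
  show "m = m'"
  proof (rule ccontr)
    assume "m \<noteq> m'"
    then have "(a(m := a m + q)) m \<noteq> (a(m' := a m' + q)) m"
      using assms by simp
    with eq show False
      by simp
  qed
qed

lemma filterlim_div2_sequentially: "filterlim (\<lambda>n::nat. n div 2) at_top sequentially"
  unfolding filterlim_at_top eventually_sequentially
  by (metis div_le_mono div_mult_self1_is_m zero_less_numeral)

definition paired_harmonic :: "nat \<Rightarrow> rat" where
  "paired_harmonic i = (-1) ^ i / of_nat (i div 2 + 1)"

lemma of_rat_paired_harmonic: "real_of_rat (paired_harmonic i) = (-1) ^ i / real (i div 2 + 1)"
  by (simp add: paired_harmonic_def of_rat_divide of_rat_power of_rat_add)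

lemma paired_harmonic_part_sums:
  "(\<Sum>i<2*m. max 0 (real_of_rat (paired_harmonic i))) = harm m"
  "(\<Sum>i<2*m. min 0 (real_of_rat (paired_harmonic i))) = - harm m"
  by (induction m) (simp_all add: of_rat_paired_harmonic harm_def field_simps)

lemma paired_harmonic_in_S_cc: "paired_harmonic \<in> S_cc"
proof -
  define h where "h i = 1 / real (i div 2 + 1)" for i
  define f where "f i = real_of_rat (paired_harmonic i)" for i
  have den: "filterlim (\<lambda>i. real (i div 2 + 1)) at_top sequentially"
    by (intro filterlim_compose[OF filterlim_real_sequentially]
        filterlim_compose[OF filterlim_add_const_nat_at_top filterlim_div2_sequentially])
  have h_lim: "h \<longlonglongrightarrow> 0"
    unfolding h_def by (rule tendsto_divide_0[OF tendsto_const filterlim_at_top_imp_at_infinity[OF den]])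
  have "summable (\<lambda>i. (-1) ^ i * h i)"
    by (rule summable_Leibniz'(1)[OF h_lim]) (simp_all add: h_def divide_left_mono div_le_mono)
  then have "summable f"
    by (simp add: f_def[abs_def] of_rat_paired_harmonic h_def)
  have harm_div2: "filterlim (\<lambda>n. harm (n div 2) :: real) at_top sequentially"
    by (rule filterlim_compose[OF harm_at_top filterlim_div2_sequentially])
  have "harm (n div 2) \<le> (\<Sum>i<n. max 0 (f i))" for n
  proof -
    have "(\<Sum>i<2 * (n div 2). max 0 (f i)) \<le> (\<Sum>i<n. max 0 (f i))"
      by (intro sum_mono2) auto
    then show ?thesis
      by (simp add: f_def paired_harmonic_part_sums)
  qed
  then have "filterlim (\<lambda>n. \<Sum>i<n. max 0 (f i)) at_top sequentially"
    by (intro filterlim_at_top_mono[OF harm_div2] always_eventually) simp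
  moreover have "harm (n div 2) \<le> - (\<Sum>i<n. min 0 (f i))" for n
  proof -
    have "(\<Sum>i<2 * (n div 2). - min 0 (f i)) \<le> (\<Sum>i<n. - min 0 (f i))"
      by (intro sum_mono2) auto
    then show ?thesis
      by (simp add: f_def paired_harmonic_part_sums sum_negf)
  qed
  then have "filterlim (\<lambda>n. \<Sum>i<n. min 0 (f i)) at_bot sequentially"
    unfolding filterlim_uminus_at_bot
    by (intro filterlim_at_top_mono[OF harm_div2] always_eventually) simp
  ultimately show ?thesis
    using \<open>summable f\<close> summable_LIMSEQ_zero[OF \<open>summable f\<close>]
    by (simp add: S_cc_def f_def[abs_def])
qed

lemma obtain_sparse_indices:
  assumes "\<And>j. eventually (P j) sequentially"
  obtains k :: "nat \<Rightarrow> nat" where "strict_mono k" "infinite (- range k)" "\<And>j. P j (k j)"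
proof -
  obtain N where N: "\<And>j i. N j \<le> i \<Longrightarrow> P j i"
    using assms choice[of "\<lambda>j M. \<forall>i\<ge>M. P j i"] by (metis eventually_sequentially)
  \<comment> \<open>all values are even, so every odd number lies in the complement of the range\<close>
  define k where "k j = 2 * (j + (\<Sum>l\<le>j. N l))" for j
  have "strict_mono k"
    by (rule strict_mono_Suc_iff[THEN iffD2]) (simp add: k_def)
  moreover have "range (\<lambda>i. 2 * i + 1) \<subseteq> - range k"
    by (auto simp: k_def) presburger
  then have "infinite (- range k)"
    by (rule infinite_super) (rule range_inj_infinite, simp add: inj_def)
  moreover have "N j \<le> k j" for j
    using member_le_sum[of j "{..j}" N] by (simp add: k_def)
  ultimately show ?thesis
    using N that by blast
qed

lemma good_sub_Compl_range:
  assumes k: "strict_mono k" "infinite (- range k)"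
    and summable: "summable (\<lambda>i. real_of_rat (a i))"
    and abs_summable: "summable (\<lambda>j. \<bar>real_of_rat (a (k j))\<bar>)"
    and small: "(\<Sum>j. \<bar>real_of_rat (a (k j))\<bar>) < \<epsilon>"
  shows "good_sub \<epsilon> (- range k) a"
proof -
  define f where "f i = real_of_rat (a i)" for i
  define T where "T = (\<Sum>j. f (k j))"
  have "(\<lambda>j. f (k j)) sums T"
    using summable_rabs_cancel[OF abs_summable] by (simp add: T_def f_def summable_sums)
  then have "(\<lambda>i. if i \<in> range k then f i else 0) sums T"
    by (subst sums_mono_reindex[OF k(1), symmetric]) auto
  from sums_diff[OF summable_sums[OF summable[folded f_def]] this]
  have "(\<lambda>i. f i - (if i \<in> range k then f i else 0)) sums (suminf f - T)" .
  also have "(\<lambda>i. f i - (if i \<in> range k then f i else 0)) = (\<lambda>i. if i \<in> - range k then f i else 0)"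
    by auto
  finally have "(\<lambda>n. f (enumerate (- range k) n)) sums (suminf f - T)"
    by (simp add: sums_enumerate_iff[OF k(2)])
  moreover have "\<bar>T\<bar> < \<epsilon>"
    using summable_rabs[OF abs_summable] small by (simp add: T_def f_def)
  ultimately show ?thesis
    unfolding good_sub_def f_def[symmetric] by (intro exI[of _ "suminf f - T"]) auto
qed

lemma finite_family_good_sub:
  assumes "\<epsilon> > 0" and "finite \<A>" and "\<A> \<subseteq> S_cc"
  shows "\<exists>X\<in>inf_coinf. \<forall>a\<in>\<A>. good_sub \<epsilon> X a"
proof -
  define b where "b j = \<epsilon> / 4 * (1/2) ^ j" for j :: nat
  have b_sums: "b sums (\<epsilon> / 2)"
    using sums_mult[OF geometric_sums[of "1/2 :: real"], of "\<epsilon> / 4"] by (simp add: b_def[abs_def])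
  have "eventually (\<lambda>i. \<forall>a\<in>\<A>. \<bar>real_of_rat (a i)\<bar> < b j) sequentially" for j
  proof (rule eventually_ball_finite[OF \<open>finite \<A>\<close>], rule ballI)
    fix a assume "a \<in> \<A>"
    then have "(\<lambda>i. real_of_rat (a i)) \<longlonglongrightarrow> 0"
      using assms(3) by (auto simp: S_cc_def)
    moreover have "b j > 0"
      using assms(1) by (simp add: b_def)
    ultimately show "eventually (\<lambda>i. \<bar>real_of_rat (a i)\<bar> < b j) sequentially"
      by (auto dest: tendstoD simp: dist_real_def)
  qed
  then obtain k where k: "strict_mono k" "infinite (- range k)"
    and bound: "\<And>j. \<forall>a\<in>\<A>. \<bar>real_of_rat (a (k j))\<bar> < b j"
    using obtain_sparse_indices[of "\<lambda>j i. \<forall>a\<in>\<A>. \<bar>real_of_rat (a i)\<bar> < b j"] by blast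
  have "- range k \<in> inf_coinf"
    using k range_inj_infinite[OF strict_mono_imp_inj_on[OF k(1)]] by (simp add: inf_coinf_def)
  moreover have "good_sub \<epsilon> (- range k) a" if "a \<in> \<A>" for a
  proof (rule good_sub_Compl_range[OF k])
    show "summable (\<lambda>i. real_of_rat (a i))"
      using that assms(3) by (auto simp: S_cc_def)
    have le: "\<bar>real_of_rat (a (k j))\<bar> \<le> b j" for j
      using bound[of j] that by fastforce
    show abs_summable: "summable (\<lambda>j. \<bar>real_of_rat (a (k j))\<bar>)"
      by (rule summable_comparison_test'[OF sums_summable[OF b_sums], of 0]) (use le in simp)
    have "(\<Sum>j. \<bar>real_of_rat (a (k j))\<bar>) \<le> \<epsilon> / 2"
      using suminf_le[OF le abs_summable sums_summable[OF b_sums]] sums_unique[OF b_sums] by simp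
    then show "(\<Sum>j. \<bar>real_of_rat (a (k j))\<bar>) < \<epsilon>"
      using assms(1) by linarith
  qed
  ultimately show ?thesis
    by blast
qed

lemma ss_perp_family_infinite:
  assumes "\<epsilon> > 0" and "ss_perp_family \<epsilon> \<A>"
  shows "infinite \<A>"
  using assms finite_family_good_sub unfolding ss_perp_family_def by blast

lemma card_of_range_inj_nat:
  fixes f :: "nat \<Rightarrow> 'a"
  assumes "inj f"
  shows "(card_of (range f), natLeq) \<in> ordIso"
proof -
  have "(card_of (UNIV :: nat set), card_of (range f)) \<in> ordIso"
    using assms card_of_ordIso by (blast intro: inj_on_imp_bij_betw)
  then show ?thesis
    using card_of_nat ordIso_symmetric ordIso_transitive by blast
qed

theorem mainTheorem13:
  fixes \<epsilon> :: real
  assumes "\<epsilon> > 0"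
  shows "ss_perp_is_aleph0 \<epsilon>"
proof -
  obtain n :: nat where n: "2 * \<epsilon> < real n"
    using reals_Archimedean2 by blast
  define q :: rat where "q = of_nat n"
  have "2 * \<epsilon> \<le> real_of_rat q" and "q \<noteq> 0"
    using n assms by (auto simp: q_def)
  then have "ss_perp_family \<epsilon> (range (\<lambda>m. paired_harmonic(m := paired_harmonic m + q)))"
    and "(card_of (range (\<lambda>m. paired_harmonic(m := paired_harmonic m + q))), natLeq) \<in> ordIso"
    by (simp_all add: ss_perp_family_bumps paired_harmonic_in_S_cc card_of_range_inj_nat inj_bumps)
  moreover have "(natLeq, card_of \<A>) \<in> ordLeq" if "ss_perp_family \<epsilon> \<A>" for \<A>
    using ss_perp_family_infinite[OF assms that] infinite_iff_natLeq_ordLeq by blast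
  ultimately show ?thesis
    unfolding ss_perp_is_aleph0_def by blast
qed

end
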